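(* Let $\alpha\in\{l_1,r\}$ and let $\{\rho_{a|x}\}_{a\in\{0,1\},x\in\{1,2,3\}}$ be a qubit assemblage admitting an LHS model. Then $$S:=\sum_{a,b=0}^{1}\ \sum_{(i,j,k)}p(a|i)\,p(b|j)\,C^\alpha_k(\rho'_{a|i})\,C^\alpha_k(\rho'_{b|j})\;\le\;2\Omega_\alpha=4,$$ where the inner sum runs over all ordered triples $(i,j,k)$ of pairwise distinct elements of $\{1,2,3\}$.
   Context: $\sigma_1,\sigma_2,\sigma_3$ are the Pauli matrices; "basis $k$" is the eigenbasis $\{|e^k_0\rangle,|e^k_1\rangle\}$ of $\sigma_k$. Coherence measures: $C^{l_1}_k(\rho)=\sum_{m\ne n}|\langle e^k_m|\rho|e^k_n\rangle|$ and $C^r_k(\rho)=S(\Delta_k(\rho))-S(\rho)$, with $S$ the von Neumann entropy (base 2) and $\Delta_k$ the complete dephasing in basis $k$; $\Omega_{l_1}=\Omega_r=2$. A qubit assemblage is a family of positive semidefinite operators $\rho_{a|x}$ on $\mathbb C^2$ ($a\in\{0,1\}$ outcome, $x\in\{1,2,3\}$ setting) with $\operatorname{Tr}\sum_a\rho_{a|x}=1$ for each $x$; $p(a|x)=\operatorname{Tr}\rho_{a|x}$ and $\rho'_{a|x}=\rho_{a|x}/p(a|x)$ (terms with $p(a|x)=0$ contribute zero). The assemblage admits an LHS (local hidden state) model if there exist a finite set of hidden variables $\lambda$ with probabilities $P_\lambda$, conditional probabilities $p(a|x,\lambda)\ge0$ with $\sum_a p(a|x,\lambda)=1$, and qubit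 density matrices $\rho_\lambda$ such that $\rho_{a|x}=\sum_\lambda P_\lambda\,p(a|x,\lambda)\,\rho_\lambda$ for all $a,x$. *)

theory Defs
  imports "HOL-Analysis.Analysis"
begin

text \<open>Qubit operators are 2x2 complex matrices, type complex^2^2 (indices 1,2 of type 2).\<close>

type_synonym qop = "complex^2^2"
type_synonym qvec = "complex^2"

definition mk_vec :: "complex \<Rightarrow> complex \<Rightarrow> qvec" where
  "mk_vec a b = (\<chi> i. if i = 1 then a else b)"

definition mk_mat :: "complex \<Rightarrow> complex \<Rightarrow> complex \<Rightarrow> complex \<Rightarrow> qop" where
  "mk_mat a b c d = (\<chi> i. if i = 1 then mk_vec a b else mk_vec c d)"

definition pauli :: "nat \<Rightarrow> qop" where
  "pauli k = (if k = 1 then mk_mat 0 1 1 0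
              else if k = 2 then mk_mat 0 (-\<i>) \<i> 0
              else mk_mat 1 0 0 (-1))"

text \<open>Eigenbasis of sigma_k: ebasis k 0 (eigenvalue +1), ebasis k 1 (eigenvalue -1).\<close>
definition ebasis :: "nat \<Rightarrow> nat \<Rightarrow> qvec" where
  "ebasis k m = (if k = 1 then (if m = 0 then mk_vec (1 / sqrt 2) (1 / sqrt 2)
                                      else mk_vec (1 / sqrt 2) (- 1 / sqrt 2))
                 else if k = 2 then (if m = 0 then mk_vec (1 / sqrt 2) (\<i> / sqrt 2)
                                      else mk_vec (1 / sqrt 2) (- \<i> / sqrt 2))
                 else (if m = 0 then mk_vec 1 0 else mk_vec 0 1))"

definition braket :: "qvec \<Rightarrow> qop \<Rightarrow> qvec \<Rightarrow> complex" where
  "braket u A v = (\<Sum>i\<in>UNIV. cnj (u $ i) * ((A *v v) $ i))"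

definition outer :: "qvec \<Rightarrow> qvec \<Rightarrow> qop" where
  "outer u v = (\<chi> i j. u $ i * cnj (v $ j))"

definition cscale :: "complex \<Rightarrow> qop \<Rightarrow> qop" where
  "cscale c A = (\<chi> i j. c * A $ i $ j)"

definition psd :: "qop \<Rightarrow> bool" where
  "psd A \<longleftrightarrow> (\<forall>v. Im (braket v A v) = 0 \<and> Re (braket v A v) \<ge> 0)"

definition density :: "qop \<Rightarrow> bool" where
  "density A \<longleftrightarrow> psd A \<and> trace A = 1"

definition eigvals :: "qop \<Rightarrow> complex \<times> complex" where
  "eigvals A = (SOME (l1, l2). \<forall>z. det (mat z - A) = (z - l1) * (z - l2))"

definition eta :: "real \<Rightarrow> real" where
  "eta x = (if x = 0 then 0 else - x * log 2 x)"

definition vN_entropy :: "qop \<Rightarrow> real" where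
  "vN_entropy A = (case eigvals A of (l1, l2) \<Rightarrow> eta (Re l1) + eta (Re l2))"

definition dephase :: "nat \<Rightarrow> qop \<Rightarrow> qop" where
  "dephase k A = (\<Sum>m\<in>{0,1::nat}. cscale (braket (ebasis k m) A (ebasis k m)) (outer (ebasis k m) (ebasis k m)))"

datatype coh = L1 | Rel

definition coherence :: "coh \<Rightarrow> nat \<Rightarrow> qop \<Rightarrow> real" where
  "coherence \<alpha> k A = (case \<alpha> of
       L1 \<Rightarrow> (\<Sum>(m,n)\<in>{(m,n). m \<in> {0,1::nat} \<and> n \<in> {0,1} \<and> m \<noteq> n}.
                 cmod (braket (ebasis k m) A (ebasis k n)))
     | Rel \<Rightarrow> vN_entropy (dephase k A) - vN_entropy A)"

definition Omega :: "coh \<Rightarrow> real" where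
  "Omega \<alpha> = 2"

definition assemblage :: "(nat \<Rightarrow> nat \<Rightarrow> qop) \<Rightarrow> bool" where
  "assemblage \<rho> \<longleftrightarrow> (\<forall>a\<in>{0,1}. \<forall>x\<in>{1,2,3}. psd (\<rho> a x)) \<and>
                     (\<forall>x\<in>{1,2,3}. trace (\<rho> 0 x + \<rho> 1 x) = 1)"

definition prob :: "(nat \<Rightarrow> nat \<Rightarrow> qop) \<Rightarrow> nat \<Rightarrow> nat \<Rightarrow> real" where
  "prob \<rho> a x = Re (trace (\<rho> a x))"

text \<open>Conditional state; if p(a|x)=0 this is the zero matrix (its terms carry weight p(a|x)=0).\<close>
definition cond_state :: "(nat \<Rightarrow> nat \<Rightarrow> qop) \<Rightarrow> nat \<Rightarrow> nat \<Rightarrow> qop" where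
  "cond_state \<rho> a x = (1 / prob \<rho> a x) *\<^sub>R \<rho> a x"

definition has_LHS :: "(nat \<Rightarrow> nat \<Rightarrow> qop) \<Rightarrow> bool" where
  "has_LHS \<rho> \<longleftrightarrow> (\<exists>(\<Lambda>::nat set) (P::nat \<Rightarrow> real) (pl::nat \<Rightarrow> nat \<Rightarrow> nat \<Rightarrow> real) (\<sigma>::nat \<Rightarrow> qop).
      finite \<Lambda> \<and> (\<forall>l\<in>\<Lambda>. P l \<ge> 0) \<and> sum P \<Lambda> = 1 \<and>
      (\<forall>l\<in>\<Lambda>. \<forall>x\<in>{1,2,3}. (\<forall>a\<in>{0,1}. pl a x l \<ge> 0) \<and> pl 0 x l + pl 1 x l = 1) \<and>
      (\<forall>l\<in>\<Lambda>. density (\<sigma> l)) \<and>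
      (\<forall>a\<in>{0,1}. \<forall>x\<in>{1,2,3}. \<rho> a x = (\<Sum>l\<in>\<Lambda>. (P l * pl a x l) *\<^sub>R \<sigma> l)))"

end

theory Submission
  imports Defs "HOL-Real_Asymp.Real_Asymp"
begin

text \<open>A qubit state with Bloch vector \<open>r\<close> has \<open>C\<^sup>l\<^sup>1\<^sub>k = sqrt (\<bar>r\<bar>\<^sup>2 - r\<^sub>k\<^sup>2)\<close> and
  \<open>C\<^sup>r\<^sub>k = h(r\<^sub>k) - h(\<bar>r\<bar>)\<close>, where \<open>h(s)\<close> is the binary entropy of \<open>(1 \<plusminus> s)/2\<close>; an
  elementary but delicate calculus argument shows \<open>0 \<le> C\<^sup>r\<^sub>k \<le> C\<^sup>l\<^sup>1\<^sub>k\<close>, and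
  \<open>\<Sum>\<^sub>k (C\<^sup>l\<^sup>1\<^sub>k)\<^sup>2 = 2\<bar>r\<bar>\<^sup>2 \<le> 2\<close>. Since \<open>C\<^sup>l\<^sup>1\<^sub>k\<close> is a seminorm, an LHS model gives
  \<open>\<Sum>\<^sub>a p(a|x) C\<^sub>k(\<rho>'\<^sub>a\<^sub>|\<^sub>x) \<le> \<Sum>\<^sub>a C\<^sup>l\<^sup>1\<^sub>k(\<rho>\<^sub>a\<^sub>|\<^sub>x) \<le> M\<^sub>k := \<Sum>\<^sub>\<lambda> P\<^sub>\<lambda> C\<^sup>l\<^sup>1\<^sub>k(\<rho>\<^sub>\<lambda>)\<close>, a bound
  independent of the setting \<open>x\<close>. Each \<open>k\<close> occurs in two triples, so the sum is at most
  \<open>2 \<Sum>\<^sub>k M\<^sub>k\<^sup>2 \<le> 2 \<Sum>\<^sub>\<lambda> P\<^sub>\<lambda> \<Sum>\<^sub>k C\<^sup>l\<^sup>1\<^sub>k(\<rho>\<^sub>\<lambda>)\<^sup>2 \<le> 4\<close> by Jensen's inequality.\<close>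

section \<open>Calculus lemmas\<close>

lemma artanh_ge_self:
  assumes "0 \<le> x" "x < 1"
  shows "x \<le> artanh (x::real)"
proof -
  have "(\<lambda>u. artanh u - u) 0 \<le> (\<lambda>u. artanh u - u) x"
  proof (rule DERIV_nonneg_imp_increasing_open[OF assms(1)])
    fix u :: real assume u: "0 < u" "u < x"
    then have "0 < 1 - u^2" "1 - u^2 \<le> 1" using assms by (auto simp: abs_square_less_1)
    then have "0 \<le> 1 / (1 - u^2) - 1" by (simp add: field_simps)
    moreover have "((\<lambda>u. artanh u - u) has_real_derivative (1 / (1 - u^2) - 1)) (at u)"
      using u assms by (auto intro!: derivative_eq_intros)
    ultimately show "\<exists>y. ((\<lambda>u. artanh u - u) has_real_derivative y) (at u) \<and> 0 \<le> y" by blast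
  qed (use assms in \<open>auto intro!: continuous_intros\<close>)
  then show ?thesis by simp
qed

lemma artanh_le_div:
  assumes "0 \<le> x" "x < 1"
  shows "artanh (x::real) \<le> x / (1 - x^2)"
proof -
  have "(\<lambda>u. u / (1 - u^2) - artanh u) 0 \<le> (\<lambda>u. u / (1 - u^2) - artanh u) x"
  proof (rule DERIV_nonneg_imp_increasing_open[OF assms(1)])
    fix u :: real assume u: "0 < u" "u < x"
    have pos: "0 < 1 - u^2" using u assms by (simp add: abs_square_less_1)
    have "(1 * (1 - u^2) - u * (- (2 * u))) / (1 - u^2)^2 - 1 / (1 - u^2) = 2 * u^2 / (1 - u^2)^2"
    proof -
      define q where "q = 1 - u^2"
      have "q \<noteq> 0" "1 * (1 - u^2) - u * (- (2 * u)) = 2 - q" "2 * u^2 = 2 - 2 * q"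
        using pos unfolding q_def by (simp_all add: power2_eq_square)
      then show ?thesis unfolding q_def[symmetric] by (simp add: field_simps power2_eq_square)
    qed
    moreover have "((\<lambda>u. u / (1 - u^2) - artanh u) has_real_derivative
        (1 * (1 - u^2) - u * (- (2 * u))) / (1 - u^2)^2 - 1 / (1 - u^2)) (at u)"
      using u assms pos by (auto intro!: derivative_eq_intros simp: power2_eq_square)
    ultimately have "((\<lambda>u. u / (1 - u^2) - artanh u) has_real_derivative 2 * u^2 / (1 - u^2)^2) (at u)"
      by simp
    then show "\<exists>y. ((\<lambda>u. u / (1 - u^2) - artanh u) has_real_derivative y) (at u) \<and> 0 \<le> y"
      by fastforce
  next
    have "1 - u^2 \<noteq> 0" if "u \<in> {0..x}" for u
      using that assms abs_square_less_1[of u] by auto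
    then show "continuous_on {0..x} (\<lambda>u. u / (1 - u^2) - artanh u)"
      using assms by (intro continuous_intros) auto
  qed
  then show ?thesis by simp
qed

lemma artanh_div_self_mono:
  assumes "0 < x" "x \<le> y" "y < 1"
  shows "artanh x / x \<le> artanh (y::real) / y"
proof -
  have "(\<lambda>u. artanh u / u) x \<le> (\<lambda>u. artanh u / u) y"
  proof (rule DERIV_nonneg_imp_increasing_open[OF assms(2)])
    fix u :: real assume u: "x < u" "u < y"
    have "0 < 1 - u^2" using u assms by (simp add: abs_square_less_1)
    moreover have "artanh u \<le> u / (1 - u^2)" using u assms by (intro artanh_le_div) auto
    ultimately have "0 \<le> (u / (1 - u^2) - artanh u) / (u * u)" by simp
    moreover have "((\<lambda>u. artanh u / u) has_real_derivative (u / (1 - u^2) - artanh u) / (u * u)) (at u)"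
      using u assms \<open>0 < 1 - u^2\<close> by (auto intro!: derivative_eq_intros)
    ultimately show "\<exists>d. ((\<lambda>u. artanh u / u) has_real_derivative d) (at u) \<and> 0 \<le> d" by blast
  qed (use assms in \<open>auto intro!: continuous_intros\<close>)
  then show ?thesis by simp
qed

lemma artanh_sqrt_div_self_antimono:
  assumes "0 < x" "x \<le> y" "y < 1"
  shows "artanh y * sqrt (1 - y^2) / y \<le> artanh x * sqrt (1 - x^2) / (x::real)"
proof -
  have "(\<lambda>u. artanh u * sqrt (1 - u^2) / u) y \<le> (\<lambda>u. artanh u * sqrt (1 - u^2) / u) x"
  proof (rule DERIV_nonpos_imp_decreasing_open[OF assms(2)])
    fix u :: real assume u: "x < u" "u < y"
    have "0 < 1 - u^2" using u assms by (simp add: abs_square_less_1)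
    define s where "s = sqrt (1 - u^2)"
    have s: "0 < s" "s^2 = 1 - u^2" using \<open>0 < 1 - u^2\<close> unfolding s_def by auto
    define D where "D = ((1 / (1 - u^2)) * s + artanh u * (- u / s)) / u - artanh u * s / u^2"
    have "((\<lambda>u. artanh u * sqrt (1 - u^2) / u) has_real_derivative D) (at u)"
      unfolding D_def s_def using u assms \<open>0 < 1 - u^2\<close>
      by (auto intro!: derivative_eq_intros simp: field_simps power2_eq_square)
    moreover have "D = (u - artanh u) / (s * u^2)"
    proof -
      have "D = (u - artanh u * (u^2 + s^2)) / (s * u^2)"
        unfolding D_def s(2)[symmetric] using s(1) u assms by (simp add: field_simps power2_eq_square)
      then show ?thesis using s(2) by simp
    qed
    moreover have "u \<le> artanh u" using u assms by (intro artanh_ge_self) auto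
    ultimately show "\<exists>d. ((\<lambda>u. artanh u * sqrt (1 - u^2) / u) has_real_derivative d) (at u) \<and> d \<le> 0"
      using s(1) u assms by (intro exI[of _ D]) (auto intro!: divide_nonpos_pos)
  qed (use assms in \<open>auto intro!: continuous_intros\<close>)
  then show ?thesis by simp
qed

lemma ge_min_endpoints_if_deriv_sign_changes_once:
  fixes f f' :: "real \<Rightarrow> real"
  assumes "a \<le> c" "c \<le> b" "continuous_on {a..b} f"
    and deriv: "\<And>x. a < x \<Longrightarrow> x < b \<Longrightarrow> (f has_real_derivative f' x) (at x)"
    and once: "\<And>x y. a < x \<Longrightarrow> x < y \<Longrightarrow> y < b \<Longrightarrow> 0 \<le> f' y \<Longrightarrow> 0 \<le> f' x"
  shows "min (f a) (f b) \<le> f c"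
proof (cases "\<exists>w. a < w \<and> w < c \<and> f' w < 0")
  case True
  then obtain w where w: "a < w" "w < c" "f' w < 0" by blast
  have "f b \<le> f c"
  proof (rule DERIV_nonpos_imp_decreasing_open[OF assms(2)])
    fix x assume "c < x" "x < b"
    then show "\<exists>y. (f has_real_derivative y) (at x) \<and> y \<le> 0"
      using once[of w x] deriv[of x] w by force
  qed (use assms in \<open>auto intro: continuous_on_subset\<close>)
  then show ?thesis by simp
next
  case False
  have "f a \<le> f c"
  proof (rule DERIV_nonneg_imp_increasing_open[OF assms(1)])
    fix x assume "a < x" "x < c"
    then show "\<exists>y. (f has_real_derivative y) (at x) \<and> 0 \<le> y"
      using deriv[of x] False assms by force
  qed (use assms in \<open>auto intro: continuous_on_subset\<close>)
  then show ?thesis by simp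
qed

section \<open>Binary entropy\<close>

lemma continuous_on_x_ln_x: "continuous_on {0..} (\<lambda>x::real. x * ln x)"
proof (rule continuous_on_eq_continuous_within[THEN iffD2], intro ballI)
  fix x :: real assume "x \<in> {0..}"
  show "continuous (at x within {0..}) (\<lambda>x. x * ln x)"
  proof (cases "x = 0")
    case True
    have "((\<lambda>x::real. x * ln x) \<longlongrightarrow> 0) (at_right 0)" by real_asymp
    then show ?thesis using True by (simp add: continuous_within at_within_Ici_at_right)
  next
    case False
    then have "isCont (\<lambda>x. x * ln x) x" using \<open>x \<in> {0..}\<close> by (auto intro!: continuous_intros)
    then show ?thesis by (rule continuous_at_imp_continuous_within)
  qed
qed

lemma has_real_derivative_x_ln_x: "0 < x \<Longrightarrow> ((\<lambda>x::real. x * ln x) has_real_derivative ln x + 1) (at x)"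
  by (auto intro!: derivative_eq_intros)

text \<open>The Shannon entropy (base 2) of the distribution \<open>((1 + s)/2, (1 - s)/2)\<close>; it is the
  von Neumann entropy of a qubit whose Bloch vector has length \<open>\<bar>s\<bar>\<close>.\<close>
definition bin_entropy :: "real \<Rightarrow> real" where
  "bin_entropy s = eta ((1 + s) / 2) + eta ((1 - s) / 2)"

lemma eta_eq: "eta x = - x * ln x / ln 2"
  by (simp add: eta_def log_def)

lemma bin_entropy_eq_ln:
  "bin_entropy = (\<lambda>s. - ((1 + s) / 2 * ln ((1 + s) / 2) + (1 - s) / 2 * ln ((1 - s) / 2)) / ln 2)"
  by (rule ext) (simp add: bin_entropy_def eta_eq field_simps)

lemma continuous_on_bin_entropy: "continuous_on {-1..1} bin_entropy"
proof -
  have "continuous_on {-1..1} (\<lambda>s::real. (1 + s) / 2 * ln ((1 + s) / 2))"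
    by (rule continuous_on_compose2[OF continuous_on_x_ln_x]) (auto intro!: continuous_intros)
  moreover have "continuous_on {-1..1} (\<lambda>s::real. (1 - s) / 2 * ln ((1 - s) / 2))"
    by (rule continuous_on_compose2[OF continuous_on_x_ln_x]) (auto intro!: continuous_intros)
  ultimately show ?thesis
    unfolding bin_entropy_eq_ln by (intro continuous_on_divide continuous_on_minus continuous_on_add) auto
qed

lemma has_real_derivative_bin_entropy:
  assumes "-1 < s" "s < 1"
  shows "(bin_entropy has_real_derivative - artanh s / ln 2) (at s)"
proof -
  have plus: "((\<lambda>s. (1 + s) / 2 * ln ((1 + s) / 2)) has_real_derivative (ln ((1 + s) / 2) + 1) * (1 / 2)) (at s)"
    using assms by (intro DERIV_chain2[OF has_real_derivative_x_ln_x]) (auto intro!: derivative_eq_intros)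
  have minus: "((\<lambda>s. (1 - s) / 2 * ln ((1 - s) / 2)) has_real_derivative (ln ((1 - s) / 2) + 1) * (- 1 / 2)) (at s)"
    using assms by (intro DERIV_chain2[OF has_real_derivative_x_ln_x]) (auto intro!: derivative_eq_intros)
  have "artanh s = (ln ((1 + s) / 2) - ln ((1 - s) / 2)) / 2"
    using assms by (simp add: artanh_def ln_div)
  then have "(ln ((1 + s) / 2) + 1) * (1 / 2) + (ln ((1 - s) / 2) + 1) * (- 1 / 2) = artanh s"
    by (simp add: algebra_simps)
  with DERIV_add[OF plus minus]
  have "((\<lambda>s. (1 + s) / 2 * ln ((1 + s) / 2) + (1 - s) / 2 * ln ((1 - s) / 2))
      has_real_derivative artanh s) (at s)"
    by simp
  then show ?thesis unfolding bin_entropy_eq_ln by (intro DERIV_cdivide DERIV_minus)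
qed

lemma bin_entropy_0 [simp]: "bin_entropy 0 = 1"
  by (simp add: bin_entropy_def eta_def log_divide)

lemma bin_entropy_1 [simp]: "bin_entropy 1 = 0"
  by (simp add: bin_entropy_def eta_def)

lemma bin_entropy_minus [simp]: "bin_entropy (- s) = bin_entropy s"
  by (simp add: bin_entropy_def add.commute)

lemma bin_entropy_antimono:
  assumes "0 \<le> z" "z \<le> t" "t \<le> 1"
  shows "bin_entropy t \<le> bin_entropy z"
proof (rule DERIV_nonpos_imp_decreasing_open[OF assms(2)])
  fix u assume u: "z < u" "u < t"
  then have "u \<le> artanh u" using assms by (intro artanh_ge_self) auto
  then show "\<exists>y. (bin_entropy has_real_derivative y) (at u) \<and> y \<le> 0"
    using has_real_derivative_bin_entropy[of u] u assms by (intro exI[of _ "- artanh u / ln 2"]) auto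
qed (use assms in \<open>auto intro: continuous_on_subset[OF continuous_on_bin_entropy]\<close>)

lemma bin_entropy_le_sqrt:
  assumes "0 \<le> x" "x \<le> 1"
  shows "bin_entropy x \<le> sqrt (1 - x^2)"
proof -
  define f where "f x = sqrt (1 - x^2) - bin_entropy x" for x
  define f' where "f' x = artanh x / ln 2 - x / sqrt (1 - x^2)" for x
  have "min (f 0) (f 1) \<le> f x"
  proof (rule ge_min_endpoints_if_deriv_sign_changes_once[of 0 x 1 f f'])
    show "continuous_on {0..1} f"
      unfolding f_def by (intro continuous_intros continuous_on_subset[OF continuous_on_bin_entropy]) auto
  next
    fix u :: real assume u: "0 < u" "u < 1"
    then have "0 < 1 - u^2" by (simp add: abs_square_less_1)
    then show "(f has_real_derivative f' u) (at u)"
      unfolding f_def[abs_def] f'_def using u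
      by (auto intro!: derivative_eq_intros has_real_derivative_bin_entropy simp: field_simps)
  next
    fix u v :: real assume uv: "0 < u" "u < v" "v < 1" "0 \<le> f' v"
    have "0 < sqrt (1 - u^2)" "0 < sqrt (1 - v^2)" using uv by (simp_all add: abs_square_less_1)
    then have "ln 2 \<le> artanh v * sqrt (1 - v^2) / v"
      using uv unfolding f'_def by (simp add: field_simps)
    also have "\<dots> \<le> artanh u * sqrt (1 - u^2) / u"
      using uv by (intro artanh_sqrt_div_self_antimono) auto
    finally show "0 \<le> f' u"
      unfolding f'_def using uv \<open>0 < sqrt (1 - u^2)\<close> by (simp add: field_simps)
  qed (use assms in auto)
  then show ?thesis by (simp add: f_def)
qed

lemma bin_entropy_diff_le:
  assumes "0 \<le> z" "z \<le> t" "t \<le> 1"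
  shows "bin_entropy z - bin_entropy t \<le> sqrt (t^2 - z^2)"
proof -
  define f where "f x = sqrt (x^2 - z^2) - bin_entropy z + bin_entropy x" for x
  define f' where "f' x = x / sqrt (x^2 - z^2) - artanh x / ln 2" for x
  have "min (f z) (f 1) \<le> f t"
  proof (rule ge_min_endpoints_if_deriv_sign_changes_once[of z t 1 f f'])
    show "continuous_on {z..1} f" unfolding f_def using assms
      by (intro continuous_intros continuous_on_subset[OF continuous_on_bin_entropy]) auto
  next
    fix u :: real assume u: "z < u" "u < 1"
    then have "0 < u^2 - z^2" using assms by (simp add: power_strict_mono)
    then show "(f has_real_derivative f' u) (at u)"
      unfolding f_def[abs_def] f'_def using u assms
      by (auto intro!: derivative_eq_intros has_real_derivative_bin_entropy simp: field_simps)
  next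
    fix u v :: real assume uv: "z < u" "u < v" "v < 1" "0 \<le> f' v"
    have "0 < sqrt (u^2 - z^2)" "0 < sqrt (v^2 - z^2)" "sqrt (u^2 - z^2) \<le> sqrt (v^2 - z^2)"
      using uv assms by (simp_all add: power_strict_mono power_mono)
    have "artanh v / ln 2 \<le> v / sqrt (v^2 - z^2)" using uv(4) unfolding f'_def by simp
    then have "artanh v / ln 2 / v \<le> 1 / sqrt (v^2 - z^2)"
      using divide_right_mono[of _ _ v] uv assms by fastforce
    have "artanh u / ln 2 \<le> u * (artanh v / ln 2 / v)"
      using artanh_div_self_mono[of u v] uv assms by (simp add: field_simps)
    also have "\<dots> \<le> u * (1 / sqrt (v^2 - z^2))"
      using \<open>artanh v / ln 2 / v \<le> _\<close> uv assms by (intro mult_left_mono) auto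
    also have "\<dots> \<le> u * (1 / sqrt (u^2 - z^2))"
      using uv assms \<open>0 < sqrt (u^2 - z^2)\<close> \<open>0 < sqrt (v^2 - z^2)\<close> \<open>sqrt (u^2 - z^2) \<le> _\<close>
      by (intro mult_left_mono divide_left_mono mult_pos_pos) auto
    finally show "0 \<le> f' u" unfolding f'_def by simp
  qed (use assms in auto)
  moreover have "0 \<le> f 1" using bin_entropy_le_sqrt[of z] assms by (simp add: f_def)
  ultimately show ?thesis by (simp add: f_def)
qed

lemma bin_entropy_bounds:
  assumes "0 \<le> t" "t \<le> 1" "s^2 \<le> t^2"
  shows "bin_entropy t \<le> bin_entropy s" "bin_entropy s - bin_entropy t \<le> sqrt (t^2 - s^2)"
proof -
  have "\<bar>s\<bar> \<le> t" using assms by (metis abs_le_square_iff abs_of_nonneg)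
  moreover have "bin_entropy \<bar>s\<bar> = bin_entropy s" by (cases "0 \<le> s") auto
  ultimately show "bin_entropy t \<le> bin_entropy s" "bin_entropy s - bin_entropy t \<le> sqrt (t^2 - s^2)"
    using bin_entropy_antimono[of "\<bar>s\<bar>" t] bin_entropy_diff_le[of "\<bar>s\<bar>" t] assms by auto
qed

section \<open>Qubit operators and the Bloch representation\<close>

lemma mk_vec_nth [simp]: "mk_vec a b $ 1 = a" "mk_vec a b $ 2 = b"
  by (simp_all add: mk_vec_def)

lemma mk_mat_nth [simp]:
  "mk_mat a b c d $ 1 $ 1 = a" "mk_mat a b c d $ 1 $ 2 = b"
  "mk_mat a b c d $ 2 $ 1 = c" "mk_mat a b c d $ 2 $ 2 = d"
  by (simp_all add: mk_mat_def)

lemma braket_expand: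
  "braket u A v = cnj (u$1) * (A$1$1 * v$1 + A$1$2 * v$2) + cnj (u$2) * (A$2$1 * v$1 + A$2$2 * v$2)"
  by (simp add: braket_def sum_2 matrix_vector_mult_def)

lemma braket_add: "braket u (A + B) v = braket u A v + braket u B v"
  by (simp add: braket_expand algebra_simps)

lemma braket_zero: "braket u 0 v = 0"
  by (simp add: braket_expand)

lemma braket_scaleR: "braket u (c *\<^sub>R A) v = of_real c * braket u A v"
  by (simp add: braket_expand vector_scaleR_component) (simp add: scaleR_conv_of_real algebra_simps)

lemma braket_sum: "braket u (sum f S) v = (\<Sum>l\<in>S. braket u (f l) v)"
  by (induction S rule: infinite_finite_induct) (auto simp: braket_add braket_zero)

lemma trace_qop: "trace (A::qop) = A$1$1 + A$2$2"
  by (simp add: trace_def sum_2)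

lemma trace_scaleR: "trace (c *\<^sub>R (A::qop)) = of_real c * trace A"
  by (simp add: trace_qop vector_scaleR_component) (simp add: scaleR_conv_of_real algebra_simps)

lemma det_mat_minus_qop: "det (mat z - A) = z * z - trace A * z + det (A::qop)"
  by (simp add: det_2 mat_def trace_qop algebra_simps)

lemma sqrt2_mult_self: "complex_of_real (sqrt 2) * complex_of_real (sqrt 2) = 2"
  by (simp flip: of_real_mult)

lemma braket_ebasis_1:
  "braket (ebasis 1 0) A (ebasis 1 0) = (A$1$1 + A$1$2 + A$2$1 + A$2$2) / 2"
  "braket (ebasis 1 1) A (ebasis 1 1) = (A$1$1 - A$1$2 - A$2$1 + A$2$2) / 2"
  "braket (ebasis 1 0) A (ebasis 1 1) = (A$1$1 - A$1$2 + A$2$1 - A$2$2) / 2"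
  "braket (ebasis 1 1) A (ebasis 1 0) = (A$1$1 + A$1$2 - A$2$1 - A$2$2) / 2"
  by (simp_all add: braket_expand ebasis_def field_simps sqrt2_mult_self)

lemma braket_ebasis_2:
  "braket (ebasis 2 0) A (ebasis 2 0) = (A$1$1 + \<i> * A$1$2 - \<i> * A$2$1 + A$2$2) / 2"
  "braket (ebasis 2 1) A (ebasis 2 1) = (A$1$1 - \<i> * A$1$2 + \<i> * A$2$1 + A$2$2) / 2"
  "braket (ebasis 2 0) A (ebasis 2 1) = (A$1$1 - \<i> * A$1$2 - \<i> * A$2$1 - A$2$2) / 2"
  "braket (ebasis 2 1) A (ebasis 2 0) = (A$1$1 + \<i> * A$1$2 + \<i> * A$2$1 - A$2$2) / 2"
  by (simp_all add: braket_expand ebasis_def field_simps sqrt2_mult_self)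

lemma braket_ebasis_3:
  "braket (ebasis 3 0) A (ebasis 3 0) = A$1$1" "braket (ebasis 3 1) A (ebasis 3 1) = A$2$2"
  "braket (ebasis 3 0) A (ebasis 3 1) = A$1$2" "braket (ebasis 3 1) A (ebasis 3 0) = A$2$1"
  by (simp_all add: braket_expand ebasis_def)

lemma psd_qop_entries:
  assumes "psd A"
  shows "Im (A$1$1) = 0" "Im (A$2$2) = 0" "0 \<le> Re (A$1$1)" "0 \<le> Re (A$2$2)"
    and "A$2$1 = cnj (A$1$2)"
    and "Re (trace A) * (cmod (A$1$2))^2 \<le> Re (trace A) * (Re (A$1$1) * Re (A$2$2))"
proof -
  have form: "Im (braket v A v) = 0 \<and> 0 \<le> Re (braket v A v)" for v
    using assms unfolding psd_def by blast
  define a b c d where "a = A$1$1" "b = A$1$2" "c = A$2$1" "d = A$2$2"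
  note entries = a_b_c_d_def[symmetric]
  show ia: "Im (A$1$1) = 0" and "0 \<le> Re (A$1$1)"
    using form[of "mk_vec 1 0"] by (simp_all add: braket_expand)
  show id: "Im (A$2$2) = 0" and "0 \<le> Re (A$2$2)"
    using form[of "mk_vec 0 1"] by (simp_all add: braket_expand)
  have "Im b + Im c = 0"
    using form[of "mk_vec 1 1"] ia id by (simp add: braket_expand entries)
  moreover have "Re b = Re c"
    using form[of "mk_vec 1 \<i>"] ia id by (simp add: braket_expand entries algebra_simps)
  ultimately have cb: "c = cnj b" by (simp add: complex_eq_iff)
  then show "A$2$1 = cnj (A$1$2)" by (simp add: entries)
  obtain ra rd where ad: "a = of_real ra" "d = of_real rd"
    using ia id by (metis a_b_c_d_def complex_is_Real_iff Reals_cases)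
  have bb: "cnj b * b = of_real ((cmod b)^2)"
    by (simp add: complex_mult_cnj cmod_power2 mult.commute)
  have "braket (mk_vec (- b) a) A (mk_vec (- b) a) = a * (a * d - cnj b * b)"
    "braket (mk_vec d (- c)) A (mk_vec d (- c)) = d * (a * d - cnj b * b)"
    by (simp_all add: braket_expand entries cb ad algebra_simps)
  then have "0 \<le> ra * (ra * rd - (cmod b)^2)" "0 \<le> rd * (ra * rd - (cmod b)^2)"
    using form[of "mk_vec (- b) a"] form[of "mk_vec d (- c)"] unfolding bb ad by (simp_all flip: of_real_mult of_real_diff)
  then show "Re (trace A) * (cmod (A$1$2))^2 \<le> Re (trace A) * (Re (A$1$1) * Re (A$2$2))"
    using ad by (simp add: trace_qop entries algebra_simps)
qed

lemma psd_scaleR: "psd A \<Longrightarrow> 0 \<le> c \<Longrightarrow> psd (c *\<^sub>R A)"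
  by (simp add: psd_def braket_scaleR)

lemma psd_trace: "psd A \<Longrightarrow> trace A = of_real (Re (trace A)) \<and> 0 \<le> Re (trace A)"
  using psd_qop_entries(1-4)[of A] by (simp add: trace_qop complex_eq_iff)

text \<open>The state \<open>(I + r 1 \<sigma>\<^sub>1 + r 2 \<sigma>\<^sub>2 + r 3 \<sigma>\<^sub>3) / 2\<close> with Bloch vector \<open>r\<close>.\<close>
definition bloch_state :: "(nat \<Rightarrow> real) \<Rightarrow> qop" where
  "bloch_state r = mk_mat ((1 + of_real (r 3)) / 2) ((of_real (r 1) - \<i> * of_real (r 2)) / 2)
                          ((of_real (r 1) + \<i> * of_real (r 2)) / 2) ((1 - of_real (r 3)) / 2)"

lemma density_eq_bloch_state:
  assumes "density A"
  obtains r where "A = bloch_state r" "(r 1)^2 + (r 2)^2 + (r 3)^2 \<le> 1"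
proof -
  have psd: "psd A" and tr: "Re (A$1$1) + Re (A$2$2) = 1"
    using assms by (simp_all add: density_def trace_qop flip: plus_complex.sel)
  note entries = psd_qop_entries[OF psd]
  define r where "r k = (if k = 1 then 2 * Re (A$1$2) else if k = 2 then - 2 * Im (A$1$2)
    else Re (A$1$1) - Re (A$2$2))" for k :: nat
  have "A$1$1 = (1 + of_real (r 3)) / 2" "A$2$2 = (1 - of_real (r 3)) / 2"
    "A$1$2 = (of_real (r 1) - \<i> * of_real (r 2)) / 2" "A$2$1 = (of_real (r 1) + \<i> * of_real (r 2)) / 2"
    using entries(1,2,5) tr by (simp_all add: r_def complex_eq_iff)
  then have "A = bloch_state r"
    unfolding bloch_state_def by (simp add: vec_eq_iff forall_2)
  moreover have "(r 1)^2 + (r 2)^2 + (r 3)^2 = 4 * (cmod (A$1$2))^2 + (Re (A$1$1) - Re (A$2$2))^2"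
    by (simp add: r_def cmod_power2 algebra_simps)
  moreover have "\<dots> \<le> 4 * (Re (A$1$1) * Re (A$2$2)) + (Re (A$1$1) - Re (A$2$2))^2"
    using entries(6) tr by (simp add: trace_qop)
  moreover have "\<dots> = (Re (A$1$1) + Re (A$2$2))^2"
    by (simp add: power2_eq_square algebra_simps)
  ultimately show ?thesis using that tr by simp
qed

section \<open>Coherence of qubit states\<close>

lemma coherence_L1_eq:
  "coherence L1 k A = cmod (braket (ebasis k 0) A (ebasis k 1)) + cmod (braket (ebasis k 1) A (ebasis k 0))"
proof -
  have "{(m, n). m \<in> {0, 1::nat} \<and> n \<in> {0, 1::nat} \<and> m \<noteq> n} = {(0, 1), (1, 0)}" by auto
  then show ?thesis by (simp add: coherence_def)
qed

lemma coherence_L1_nonneg: "0 \<le> coherence L1 k A"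
  by (simp add: coherence_L1_eq)

lemma coherence_L1_scaleR: "coherence L1 k (c *\<^sub>R A) = \<bar>c\<bar> * coherence L1 k A"
  by (simp add: coherence_L1_eq braket_scaleR norm_mult algebra_simps)

lemma coherence_L1_sum_le: "coherence L1 k (sum f S) \<le> (\<Sum>l\<in>S. coherence L1 k (f l))"
proof -
  have "coherence L1 k (sum f S)
      = cmod (\<Sum>l\<in>S. braket (ebasis k 0) (f l) (ebasis k 1)) + cmod (\<Sum>l\<in>S. braket (ebasis k 1) (f l) (ebasis k 0))"
    by (simp add: coherence_L1_eq braket_sum)
  also have "\<dots> \<le> (\<Sum>l\<in>S. cmod (braket (ebasis k 0) (f l) (ebasis k 1))) + (\<Sum>l\<in>S. cmod (braket (ebasis k 1) (f l) (ebasis k 0)))"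
    by (intro add_mono norm_sum)
  also have "\<dots> = (\<Sum>l\<in>S. coherence L1 k (f l))"
    by (simp add: coherence_L1_eq sum.distrib)
  finally show ?thesis .
qed

lemma braket_ebasis_bloch_state:
  assumes "k \<in> {1, 2, 3}"
  shows "braket (ebasis k 0) (bloch_state r) (ebasis k 0) = of_real ((1 + r k) / 2)"
    and "braket (ebasis k 1) (bloch_state r) (ebasis k 1) = of_real ((1 - r k) / 2)"
    and "cmod (braket (ebasis k 0) (bloch_state r) (ebasis k 1)) = sqrt ((r 1)^2 + (r 2)^2 + (r 3)^2 - (r k)^2) / 2"
    and "cmod (braket (ebasis k 1) (bloch_state r) (ebasis k 0)) = sqrt ((r 1)^2 + (r 2)^2 + (r 3)^2 - (r k)^2) / 2"
  using assms
  by (auto simp: braket_ebasis_1 braket_ebasis_2 braket_ebasis_3 bloch_state_def complex_eq_iff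
      norm_complex_def real_sqrt_divide add.commute field_simps simp del: One_nat_def)

lemma coherence_L1_bloch_state:
  "k \<in> {1, 2, 3} \<Longrightarrow> coherence L1 k (bloch_state r) = sqrt ((r 1)^2 + (r 2)^2 + (r 3)^2 - (r k)^2)"
  by (simp add: coherence_L1_eq braket_ebasis_bloch_state del: One_nat_def)

lemma monic_quadratic_roots_eq:
  fixes a b c d :: "'a::idom"
  assumes "\<And>z. (z - a) * (z - b) = (z - c) * (z - d)"
  shows "(a = c \<and> b = d) \<or> (a = d \<and> b = c)"
proof -
  have "a = c \<or> a = d" using assms[of a] by simp
  moreover have "a * b = c * d" using assms[of 0] by simp
  with assms[of 1] have "a + b = c + d" by (simp add: algebra_simps)
  ultimately show ?thesis by auto
qed

lemma eigvals_cases: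
  assumes "\<And>z. det (mat z - A) = (z - p) * (z - q)"
  shows "eigvals A = (p, q) \<or> eigvals A = (q, p)"
proof -
  let ?roots = "\<lambda>(l1, l2). \<forall>z. det (mat z - A) = (z - l1) * (z - l2)"
  have "?roots (eigvals A)"
    unfolding eigvals_def by (rule someI[of ?roots "(p, q)"]) (use assms in simp)
  then obtain l1 l2 where "eigvals A = (l1, l2)" "\<And>z. (z - l1) * (z - l2) = (z - p) * (z - q)"
    using assms by (cases "eigvals A") auto
  then show ?thesis using monic_quadratic_roots_eq by blast
qed

lemma vN_entropy_eq_bin_entropy:
  assumes "trace A = 1" "det A = of_real ((1 - s^2) / 4)"
  shows "vN_entropy A = bin_entropy s"
proof -
  have "det (mat z - A) = (z - of_real ((1 + s) / 2)) * (z - of_real ((1 - s) / 2))" for z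
    using assms by (simp add: det_mat_minus_qop field_simps power2_eq_square)
  then have "eigvals A = (of_real ((1 + s) / 2), of_real ((1 - s) / 2))
      \<or> eigvals A = (of_real ((1 - s) / 2), of_real ((1 + s) / 2))"
    by (rule eigvals_cases)
  then show ?thesis by (auto simp: vN_entropy_def bin_entropy_def)
qed

lemma vN_entropy_bloch_state:
  "vN_entropy (bloch_state r) = bin_entropy (sqrt ((r 1)^2 + (r 2)^2 + (r 3)^2))"
proof (rule vN_entropy_eq_bin_entropy)
  show "trace (bloch_state r) = 1" by (simp add: trace_qop bloch_state_def field_simps)
  show "det (bloch_state r) = of_real ((1 - (sqrt ((r 1)^2 + (r 2)^2 + (r 3)^2))^2) / 4)"
    by (simp add: det_2 bloch_state_def complex_eq_iff field_simps power2_eq_square)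
qed

lemma dephase_nth:
  "dephase k A $ i $ j = braket (ebasis k 0) A (ebasis k 0) * (ebasis k 0 $ i * cnj (ebasis k 0 $ j))
     + braket (ebasis k 1) A (ebasis k 1) * (ebasis k 1 $ i * cnj (ebasis k 1 $ j))"
  by (simp add: dephase_def cscale_def outer_def)

lemma trace_det_dephase:
  assumes "k \<in> {1, 2, 3}"
  shows "trace (dephase k A) = braket (ebasis k 0) A (ebasis k 0) + braket (ebasis k 1) A (ebasis k 1)"
    and "det (dephase k A) = braket (ebasis k 0) A (ebasis k 0) * braket (ebasis k 1) A (ebasis k 1)"
  using assms unfolding trace_qop det_2 dephase_nth
  by (auto simp: ebasis_def field_simps sqrt2_mult_self)

lemma vN_entropy_dephase_bloch_state:
  assumes "k \<in> {1, 2, 3}"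
  shows "vN_entropy (dephase k (bloch_state r)) = bin_entropy (r k)"
  by (rule vN_entropy_eq_bin_entropy)
    (simp_all add: trace_det_dephase[OF assms] braket_ebasis_bloch_state[OF assms] field_simps
      power2_eq_square del: One_nat_def)

lemma coherence_Rel_bloch_state:
  "k \<in> {1, 2, 3} \<Longrightarrow>
    coherence Rel k (bloch_state r) = bin_entropy (r k) - bin_entropy (sqrt ((r 1)^2 + (r 2)^2 + (r 3)^2))"
  by (simp add: coherence_def vN_entropy_dephase_bloch_state vN_entropy_bloch_state)

lemma coherence_bounds:
  assumes "density A" "k \<in> {1, 2, 3}"
  shows "0 \<le> coherence \<alpha> k A" "coherence \<alpha> k A \<le> coherence L1 k A"
proof -
  obtain r where A: "A = bloch_state r" and len: "(r 1)^2 + (r 2)^2 + (r 3)^2 \<le> 1"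
    using density_eq_bloch_state[OF assms(1)] by blast
  define t where "t = sqrt ((r 1)^2 + (r 2)^2 + (r 3)^2)"
  have t_sq: "t^2 = (r 1)^2 + (r 2)^2 + (r 3)^2" unfolding t_def by simp
  have "0 \<le> t" "t \<le> 1" "(r k)^2 \<le> t^2"
    using len assms(2) by (auto simp: t_def t_sq)
  note bin_entropy_bounds[OF this]
  moreover have "coherence L1 k A = sqrt (t^2 - (r k)^2)"
    "coherence Rel k A = bin_entropy (r k) - bin_entropy t"
    using assms(2) by (simp_all add: A t_sq t_def coherence_L1_bloch_state coherence_Rel_bloch_state)
  ultimately have "0 \<le> coherence \<alpha> k A \<and> coherence \<alpha> k A \<le> coherence L1 k A"
    using coherence_L1_nonneg[of k A] by (cases \<alpha>) simp_all
  then show "0 \<le> coherence \<alpha> k A" "coherence \<alpha> k A \<le> coherence L1 k A" by auto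
qed

lemma coherence_L1_sq_sum_le:
  assumes "density A"
  shows "(\<Sum>k\<in>{1, 2, 3::nat}. (coherence L1 k A)^2) \<le> 2"
proof -
  obtain r where A: "A = bloch_state r" and len: "(r 1)^2 + (r 2)^2 + (r 3)^2 \<le> 1"
    using density_eq_bloch_state[OF assms] by blast
  have "(\<Sum>k\<in>{1, 2, 3::nat}. (coherence L1 k A)^2) = 2 * ((r 1)^2 + (r 2)^2 + (r 3)^2)"
    by (simp add: A coherence_L1_bloch_state del: One_nat_def)
  then show ?thesis using len by simp
qed

section \<open>Assemblages with a local hidden state model\<close>

lemma density_cond_state:
  assumes "psd (\<rho> a x)" "0 < prob \<rho> a x"
  shows "density (cond_state \<rho> a x)"
proof -
  have "trace (\<rho> a x) = of_real (prob \<rho> a x)" using psd_trace[OF assms(1)] by (simp add: prob_def)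
  then show ?thesis
    using assms by (simp add: density_def cond_state_def psd_scaleR trace_scaleR flip: of_real_mult)
qed

lemma weighted_coherence_bounds:
  assumes "psd (\<rho> a x)" "k \<in> {1, 2, 3}"
  shows "0 \<le> prob \<rho> a x * coherence \<alpha> k (cond_state \<rho> a x)"
    and "prob \<rho> a x * coherence \<alpha> k (cond_state \<rho> a x) \<le> coherence L1 k (\<rho> a x)"
proof -
  have "0 \<le> prob \<rho> a x" using psd_trace[OF assms(1)] by (simp add: prob_def)
  then consider "prob \<rho> a x = 0" | "0 < prob \<rho> a x" by linarith
  then have "0 \<le> prob \<rho> a x * coherence \<alpha> k (cond_state \<rho> a x)
      \<and> prob \<rho> a x * coherence \<alpha> k (cond_state \<rho> a x) \<le> coherence L1 k (\<rho> a x)"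
  proof cases
    case 1
    then show ?thesis by (simp add: coherence_L1_nonneg)
  next
    case 2
    note bounds = coherence_bounds[OF density_cond_state[OF assms(1) 2] assms(2), of \<alpha>]
    have "prob \<rho> a x * coherence \<alpha> k (cond_state \<rho> a x) \<le> prob \<rho> a x * coherence L1 k (cond_state \<rho> a x)"
      using bounds 2 by simp
    also have "\<dots> = coherence L1 k (\<rho> a x)"
      using 2 by (simp add: cond_state_def coherence_L1_scaleR)
    finally show ?thesis using bounds 2 by simp
  qed
  then show "0 \<le> prob \<rho> a x * coherence \<alpha> k (cond_state \<rho> a x)"
    and "prob \<rho> a x * coherence \<alpha> k (cond_state \<rho> a x) \<le> coherence L1 k (\<rho> a x)"
    by auto
qed

lemma weighted_mean_sq_le:
  fixes P f :: "'a \<Rightarrow> real"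
  assumes "\<forall>l\<in>L. 0 \<le> P l" "sum P L = 1"
  shows "(\<Sum>l\<in>L. P l * f l)^2 \<le> (\<Sum>l\<in>L. P l * (f l)^2)"
proof -
  define m where "m = (\<Sum>l\<in>L. P l * f l)"
  have "0 \<le> (\<Sum>l\<in>L. P l * (f l - m)^2)" using assms by (intro sum_nonneg) auto
  also have "\<dots> = (\<Sum>l\<in>L. P l * (f l)^2 - 2 * m * (P l * f l) + m^2 * P l)"
    by (rule sum.cong) (auto simp: power2_eq_square algebra_simps)
  also have "\<dots> = (\<Sum>l\<in>L. P l * (f l)^2) - m^2"
    using assms(2) by (simp add: sum.distrib sum_subtractf flip: sum_distrib_left m_def)
      (simp add: power2_eq_square)
  finally show ?thesis unfolding m_def by simp
qed

definition LHS_model ::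
    "(nat \<Rightarrow> nat \<Rightarrow> qop) \<Rightarrow> nat set \<Rightarrow> (nat \<Rightarrow> real) \<Rightarrow> (nat \<Rightarrow> nat \<Rightarrow> nat \<Rightarrow> real) \<Rightarrow> (nat \<Rightarrow> qop) \<Rightarrow> bool"
  where "LHS_model \<rho> \<Lambda> P pl \<sigma> \<longleftrightarrow>
      finite \<Lambda> \<and> (\<forall>l\<in>\<Lambda>. P l \<ge> 0) \<and> sum P \<Lambda> = 1 \<and>
      (\<forall>l\<in>\<Lambda>. \<forall>x\<in>{1,2,3}. (\<forall>a\<in>{0,1}. pl a x l \<ge> 0) \<and> pl 0 x l + pl 1 x l = 1) \<and>
      (\<forall>l\<in>\<Lambda>. density (\<sigma> l)) \<and>
      (\<forall>a\<in>{0,1}. \<forall>x\<in>{1,2,3}. \<rho> a x = (\<Sum>l\<in>\<Lambda>. (P l * pl a x l) *\<^sub>R \<sigma> l))"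

lemma has_LHS_iff: "has_LHS \<rho> \<longleftrightarrow> (\<exists>\<Lambda> P pl \<sigma>. LHS_model \<rho> \<Lambda> P pl \<sigma>)"
  unfolding has_LHS_def LHS_model_def by blast

lemma assemblage_psd: "assemblage \<rho> \<Longrightarrow> a \<in> {0, 1} \<Longrightarrow> x \<in> {1, 2, 3} \<Longrightarrow> psd (\<rho> a x)"
  unfolding assemblage_def by blast

lemma LHS_outcome_sum_coherence_bounds:
  assumes "assemblage \<rho>" "LHS_model \<rho> \<Lambda> P pl \<sigma>" "x \<in> {1, 2, 3}" "k \<in> {1, 2, 3}"
  shows "0 \<le> (\<Sum>a\<in>{0, 1}. prob \<rho> a x * coherence \<alpha> k (cond_state \<rho> a x))"
    and "(\<Sum>a\<in>{0, 1}. prob \<rho> a x * coherence \<alpha> k (cond_state \<rho> a x))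
      \<le> (\<Sum>l\<in>\<Lambda>. P l * coherence L1 k (\<sigma> l))"
proof -
  show "0 \<le> (\<Sum>a\<in>{0, 1}. prob \<rho> a x * coherence \<alpha> k (cond_state \<rho> a x))"
    using assms(1,3,4) by (intro sum_nonneg weighted_coherence_bounds(1) assemblage_psd) auto
  have "prob \<rho> a x * coherence \<alpha> k (cond_state \<rho> a x) \<le> (\<Sum>l\<in>\<Lambda>. P l * pl a x l * coherence L1 k (\<sigma> l))"
    if a: "a \<in> {0, 1}" for a
  proof -
    have decomposition: "\<rho> a x = (\<Sum>l\<in>\<Lambda>. (P l * pl a x l) *\<^sub>R \<sigma> l)"
      using assms(2,3) a unfolding LHS_model_def by blast
    have "prob \<rho> a x * coherence \<alpha> k (cond_state \<rho> a x) \<le> coherence L1 k (\<rho> a x)"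
      using assms(1,3,4) a by (intro weighted_coherence_bounds assemblage_psd)
    also have "\<dots> = coherence L1 k (\<Sum>l\<in>\<Lambda>. (P l * pl a x l) *\<^sub>R \<sigma> l)"
      by (simp only: decomposition)
    also have "\<dots> \<le> (\<Sum>l\<in>\<Lambda>. coherence L1 k ((P l * pl a x l) *\<^sub>R \<sigma> l))"
      by (rule coherence_L1_sum_le)
    also have "\<dots> = (\<Sum>l\<in>\<Lambda>. P l * pl a x l * coherence L1 k (\<sigma> l))"
      using assms(2,3) a by (intro sum.cong) (auto simp: LHS_model_def coherence_L1_scaleR)
    finally show ?thesis .
  qed
  then have "(\<Sum>a\<in>{0, 1}. prob \<rho> a x * coherence \<alpha> k (cond_state \<rho> a x))
      \<le> (\<Sum>a\<in>{0, 1::nat}. \<Sum>l\<in>\<Lambda>. P l * pl a x l * coherence L1 k (\<sigma> l))"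
    by (rule sum_mono)
  also have "\<dots> = (\<Sum>l\<in>\<Lambda>. P l * (pl 0 x l + pl 1 x l) * coherence L1 k (\<sigma> l))"
    by (simp add: sum.distrib algebra_simps)
  also have "\<dots> = (\<Sum>l\<in>\<Lambda>. P l * coherence L1 k (\<sigma> l))"
    using assms(2,3) by (intro sum.cong) (auto simp: LHS_model_def)
  finally show "(\<Sum>a\<in>{0, 1}. prob \<rho> a x * coherence \<alpha> k (cond_state \<rho> a x))
      \<le> (\<Sum>l\<in>\<Lambda>. P l * coherence L1 k (\<sigma> l))" .
qed

lemma LHS_mean_coherence_sq_sum_le:
  assumes "LHS_model \<rho> \<Lambda> P pl \<sigma>"
  shows "(\<Sum>k\<in>{1, 2, 3::nat}. (\<Sum>l\<in>\<Lambda>. P l * coherence L1 k (\<sigma> l))^2) \<le> 2"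
proof -
  have P: "\<forall>l\<in>\<Lambda>. 0 \<le> P l" "sum P \<Lambda> = 1" using assms by (simp_all add: LHS_model_def)
  have "(\<Sum>k\<in>{1, 2, 3::nat}. (\<Sum>l\<in>\<Lambda>. P l * coherence L1 k (\<sigma> l))^2)
      \<le> (\<Sum>k\<in>{1, 2, 3::nat}. \<Sum>l\<in>\<Lambda>. P l * (coherence L1 k (\<sigma> l))^2)"
    by (intro sum_mono weighted_mean_sq_le[OF P])
  also have "\<dots> = (\<Sum>l\<in>\<Lambda>. P l * (\<Sum>k\<in>{1, 2, 3::nat}. (coherence L1 k (\<sigma> l))^2))"
    by (simp add: distrib_left sum.distrib)
  also have "\<dots> \<le> (\<Sum>l\<in>\<Lambda>. P l * 2)"
    using assms P(1) by (intro sum_mono mult_left_mono coherence_L1_sq_sum_le) (auto simp: LHS_model_def)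
  also have "\<dots> = 2" using P(2) by (simp flip: sum_distrib_right)
  finally show ?thesis .
qed

lemma sum_distinct_triples_le:
  fixes u :: "nat \<Rightarrow> nat \<Rightarrow> real" and M :: "nat \<Rightarrow> real"
  assumes "\<And>x k. x \<in> {1, 2, 3} \<Longrightarrow> k \<in> {1, 2, 3} \<Longrightarrow> 0 \<le> u x k \<and> u x k \<le> M k"
  shows "(\<Sum>(i, j, k)\<in>{(i, j, k). i \<in> {1, 2, 3::nat} \<and> j \<in> {1, 2, 3} \<and> k \<in> {1, 2, 3} \<and> i \<noteq> j \<and> j \<noteq> k \<and> i \<noteq> k}.
      u i k * u j k) \<le> 2 * (\<Sum>k\<in>{1, 2, 3}. (M k)^2)"
proof -
  have triples: "{(i, j, k). i \<in> {1, 2, 3::nat} \<and> j \<in> {1, 2, 3} \<and> k \<in> {1, 2, 3} \<and> i \<noteq> j \<and> j \<noteq> k \<and> i \<noteq> k}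
      = {(1, 2, 3), (1, 3, 2), (2, 1, 3), (2, 3, 1), (3, 1, 2), (3, 2, 1)}"
    by auto
  have bound: "u i k * u j k \<le> (M k)^2" if "i \<in> {1, 2, 3}" "j \<in> {1, 2, 3}" "k \<in> {1, 2, 3}" for i j k
    using assms[of i k] assms[of j k] that by (auto simp: power2_eq_square intro: mult_mono)
  show ?thesis
    using bound[of 1 2 3] bound[of 1 3 2] bound[of 2 3 1] unfolding triples by (simp del: One_nat_def)
qed

theorem proposition1:
  fixes \<alpha> :: coh and \<rho> :: "nat \<Rightarrow> nat \<Rightarrow> qop"
  assumes "assemblage \<rho>" and "has_LHS \<rho>"
  shows "(\<Sum>a\<in>{0,1::nat}. \<Sum>b\<in>{0,1::nat}.
            \<Sum>(i,j,k)\<in>{(i,j,k). i \<in> {1,2,3::nat} \<and> j \<in> {1,2,3} \<and> k \<in> {1,2,3} \<and> i \<noteq> j \<and> j \<noteq> k \<and> i \<noteq> k}.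
              prob \<rho> a i * prob \<rho> b j * coherence \<alpha> k (cond_state \<rho> a i) * coherence \<alpha> k (cond_state \<rho> b j))
         \<le> 2 * Omega \<alpha>"
proof -
  obtain \<Lambda> P pl \<sigma> where model: "LHS_model \<rho> \<Lambda> P pl \<sigma>"
    using assms(2) by (auto simp: has_LHS_iff)
  define T where "T = {(i, j, k). i \<in> {1, 2, 3::nat} \<and> j \<in> {1, 2, 3} \<and> k \<in> {1, 2, 3} \<and> i \<noteq> j \<and> j \<noteq> k \<and> i \<noteq> k}"
  define u where "u x k = (\<Sum>a\<in>{0, 1::nat}. prob \<rho> a x * coherence \<alpha> k (cond_state \<rho> a x))" for x k
  define M where "M k = (\<Sum>l\<in>\<Lambda>. P l * coherence L1 k (\<sigma> l))" for k
  have "0 \<le> u x k \<and> u x k \<le> M k" if "x \<in> {1, 2, 3}" "k \<in> {1, 2, 3}" for x k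
    using LHS_outcome_sum_coherence_bounds[OF assms(1) model that] unfolding u_def M_def by blast
  from sum_distinct_triples_le[of u M, OF this] LHS_mean_coherence_sq_sum_le[OF model]
  have "(\<Sum>(i, j, k)\<in>T. u i k * u j k) \<le> 2 * Omega \<alpha>"
    unfolding T_def M_def Omega_def by linarith
  moreover have "(\<Sum>a\<in>{0, 1::nat}. \<Sum>b\<in>{0, 1::nat}. \<Sum>(i, j, k)\<in>T.
      prob \<rho> a i * prob \<rho> b j * coherence \<alpha> k (cond_state \<rho> a i) * coherence \<alpha> k (cond_state \<rho> b j))
    = (\<Sum>(i, j, k)\<in>T. u i k * u j k)"
    unfolding u_def by (simp add: sum.distrib case_prod_beta algebra_simps)
  ultimately show ?thesis unfolding T_def by simp
qed

end
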